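(* Let $R$ be a blind bisimulation on the nodes of a $\lambda$-graph $G$ and let $Q$ be a binary relation with $Q\subseteq R$. Let $n,m$ be nodes with $n\,Q\,m$, and $\tau$ a trace such that the path $n\xrightarrow{\tau}$ crosses an abstraction node $l$ and the path $m\xrightarrow{\tau}$ crosses an abstraction node $l'$. If $l\,R\,l'$ then $l\,Q^{\Downarrow}\,l'$.
   Context: A pre-$\lambda$-graph is a directed graph whose nodes are of four kinds: an application node $@(n_1,n_2)$ has exactly two children, its left child $n_1$ and its right child $n_2$; an abstraction node $\lambda(n)$ has exactly one child, its body $n$; a free variable node has no children and carries an atom $\mathrm{id}(n)$ from a fixed set of atoms, distinct free variable nodes carrying distinct atoms; a bound variable node $\mathrm{var}(l)$ has exactly one outgoing binding edge, to an abstraction node $l$ (its binder). A trace is a finite sequence of directions from $\{\swarrow,\downarrow,\searrow\}$; $\epsilon$ is the empty trace and $d\cdot\tau$ is the trace $\tau$ extended by one final step $d$. Paths $n\xrightarrow{\tau}m$ are defined inductively: $n\xrightarrow{\epsilon}n$; if $n\xrightarrow{\tau}\lambda(m)$ then $n\xrightarrow{\downarrow\cdot\tau}m$; if $n\xrightarrow{\tau}@(m_1,m_2)$ then $n\xrightarrow{\swarrow\cdot\tau}m_1$ and $n\xrightarrow{\searrow\cdot\tau}m_2$ (binding edges are never followed). We write $n\xrightarrow{\tau}$ if $n\xrightarrow{\tau}m$ for some $m$. The path $n\xrightarrow{\tau}$ crosses a node $m$ if either $n\xrightarrow{\tau}m$, or $\tau=d\cdot\tau'$ and $n\xrightarrow{\tau'}$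 crosses $m$. A root is a node $r$ such that the only path ending in $r$ has the empty trace. A node $m$ dominates $n$ if every path from a root to $n$ crosses $m$. A $\lambda$-graph is a pre-$\lambda$-graph that has finitely many nodes, is acyclic ($n\xrightarrow{\tau}n$ holds only for $\tau=\epsilon$), and is dominated (every bound variable node $\mathrm{var}(l)$ is dominated by its binder $l$). Two nodes are homogeneous if both are application nodes, or both abstraction nodes, or both free variable nodes, or both bound variable nodes; a binary relation $R$ on nodes is homogeneous if it only relates homogeneous nodes. Rules: $(\swarrow)$: $@(n_1,n_2)\,R\,@(m_1,m_2)$ implies $n_1\,R\,m_1$; $(\searrow)$: $@(n_1,n_2)\,R\,@(m_1,m_2)$ implies $n_2\,R\,m_2$; $(\downarrow)$: $\lambda(n)\,R\,\lambda(m)$ implies $n\,R\,m$. $R$ is propagated if closed under $(\swarrow),(\downarrow),(\searrow)$. A blind bisimulation is a homogeneous propagated relation. $R^{\Downarrow}$ (propagation) is the smallest propagated relation containing $R$. *)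

theory Defs
  imports Main
begin

datatype ('n, 'a) node_kind =
    App 'n 'n
  | Lam 'n
  | FVar 'a
  | BVar 'n        (* bound variable node var(l): binding edge to l *)

datatype dir = SW | Down | SE

(* A trace is a list of directions; d # tau stands for d . tau, i.e. tau
   extended by one FINAL step d.  [] is the empty trace epsilon. *)
type_synonym trace = "dir list"

inductive path :: "('n \<Rightarrow> ('n, 'a) node_kind) \<Rightarrow> 'n \<Rightarrow> trace \<Rightarrow> 'n \<Rightarrow> bool"
  for lab where
  path_eps: "path lab n [] n"
| path_down: "path lab n \<tau> l \<Longrightarrow> lab l = Lam m \<Longrightarrow> path lab n (Down # \<tau>) m"
| path_sw: "path lab n \<tau> a \<Longrightarrow> lab a = App m1 m2 \<Longrightarrow> path lab n (SW # \<tau>) m1"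
| path_se: "path lab n \<tau> a \<Longrightarrow> lab a = App m1 m2 \<Longrightarrow> path lab n (SE # \<tau>) m2"

inductive crosses :: "('n \<Rightarrow> ('n, 'a) node_kind) \<Rightarrow> 'n \<Rightarrow> trace \<Rightarrow> 'n \<Rightarrow> bool"
  for lab where
  crosses_here: "path lab n \<tau> m \<Longrightarrow> crosses lab n \<tau> m"
| crosses_prefix: "crosses lab n \<tau>' m \<Longrightarrow> crosses lab n (d # \<tau>') m"

definition pre_lambda_graph :: "'n set \<Rightarrow> ('n \<Rightarrow> ('n, 'a) node_kind) \<Rightarrow> bool" where
  "pre_lambda_graph N lab \<longleftrightarrow>
     (\<forall>n\<in>N. (\<forall>n1 n2. lab n = App n1 n2 \<longrightarrow> n1 \<in> N \<and> n2 \<in> N)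
           \<and> (\<forall>b. lab n = Lam b \<longrightarrow> b \<in> N)
           \<and> (\<forall>l. lab n = BVar l \<longrightarrow> l \<in> N \<and> (\<exists>b. lab l = Lam b))) \<and>
     (\<forall>n\<in>N. \<forall>m\<in>N. \<forall>x. lab n = FVar x \<and> lab m = FVar x \<longrightarrow> n = m)"

definition is_root :: "'n set \<Rightarrow> ('n \<Rightarrow> ('n, 'a) node_kind) \<Rightarrow> 'n \<Rightarrow> bool" where
  "is_root N lab r \<longleftrightarrow> r \<in> N \<and> (\<forall>x\<in>N. \<forall>\<tau>. path lab x \<tau> r \<longrightarrow> \<tau> = [])"

definition dominates :: "'n set \<Rightarrow> ('n \<Rightarrow> ('n, 'a) node_kind) \<Rightarrow> 'n \<Rightarrow> 'n \<Rightarrow> bool" where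
  "dominates N lab m n \<longleftrightarrow>
     (\<forall>r \<tau>. is_root N lab r \<longrightarrow> path lab r \<tau> n \<longrightarrow> crosses lab r \<tau> m)"

definition lambda_graph :: "'n set \<Rightarrow> ('n \<Rightarrow> ('n, 'a) node_kind) \<Rightarrow> bool" where
  "lambda_graph N lab \<longleftrightarrow>
     pre_lambda_graph N lab \<and> finite N \<and>
     (\<forall>n\<in>N. \<forall>\<tau>. path lab n \<tau> n \<longrightarrow> \<tau> = []) \<and>
     (\<forall>n\<in>N. \<forall>l. lab n = BVar l \<longrightarrow> dominates N lab l n)"

definition homogeneous_nodes :: "('n \<Rightarrow> ('n, 'a) node_kind) \<Rightarrow> 'n \<Rightarrow> 'n \<Rightarrow> bool" where
  "homogeneous_nodes lab n m \<longleftrightarrow>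
     (\<exists>a b c d. lab n = App a b \<and> lab m = App c d) \<or>
     (\<exists>a b. lab n = Lam a \<and> lab m = Lam b) \<or>
     (\<exists>a b. lab n = FVar a \<and> lab m = FVar b) \<or>
     (\<exists>a b. lab n = BVar a \<and> lab m = BVar b)"

definition homogeneous :: "('n \<Rightarrow> ('n, 'a) node_kind) \<Rightarrow> 'n rel \<Rightarrow> bool" where
  "homogeneous lab R \<longleftrightarrow> (\<forall>(n, m)\<in>R. homogeneous_nodes lab n m)"

definition propagated :: "('n \<Rightarrow> ('n, 'a) node_kind) \<Rightarrow> 'n rel \<Rightarrow> bool" where
  "propagated lab R \<longleftrightarrow>
     (\<forall>n m n1 n2 m1 m2. (n, m) \<in> R \<longrightarrow> lab n = App n1 n2 \<longrightarrow> lab m = App m1 m2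
        \<longrightarrow> (n1, m1) \<in> R \<and> (n2, m2) \<in> R) \<and>
     (\<forall>n m a b. (n, m) \<in> R \<longrightarrow> lab n = Lam a \<longrightarrow> lab m = Lam b \<longrightarrow> (a, b) \<in> R)"

definition blind_bisimulation :: "('n \<Rightarrow> ('n, 'a) node_kind) \<Rightarrow> 'n rel \<Rightarrow> bool" where
  "blind_bisimulation lab R \<longleftrightarrow> homogeneous lab R \<and> propagated lab R"

(* R^\<Down>: smallest propagated relation containing R *)
definition propagation :: "('n \<Rightarrow> ('n, 'a) node_kind) \<Rightarrow> 'n rel \<Rightarrow> 'n rel" where
  "propagation lab R = \<Inter>{S. R \<subseteq> S \<and> propagated lab S}"

end

theory Submission imports Defs begin

text \<open>Write \<open>n \<Rightarrow>\<sigma> m\<close> for a path. Splitting the two crossings at the common trace \<open>\<tau>\<close>, one of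
  them is reached by a trace \<open>\<beta>\<close> and the other by \<open>\<sigma> @ \<beta>\<close>, say \<open>n \<Rightarrow>\<beta> l\<close> and \<open>m \<Rightarrow>\<beta> k \<Rightarrow>\<sigma> l'\<close>.
  Propagating \<open>n Q m\<close> along \<open>\<beta>\<close> gives \<open>l Q\<^sup>\<Down> k\<close>, so it remains to show \<open>\<sigma> = []\<close>. Otherwise
  \<open>l R k\<close>, \<open>l R l'\<close> and \<open>k \<Rightarrow>\<sigma> l'\<close>; transporting \<open>\<sigma>\<close> through the bisimulation (in both
  directions) yields \<open>l \<Rightarrow>\<sigma> l\<^sub>1\<close> with \<open>l\<^sub>1 R l'\<close> and \<open>l' \<Rightarrow>\<sigma> l'\<^sub>1\<close> with \<open>l\<^sub>1 R l'\<^sub>1\<close>: the same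
  configuration one \<open>\<sigma>\<close>-step further down. In a finite acyclic graph this cannot repeat forever.\<close>

inductive_cases pathE_Nil: "path lab n [] m"
inductive_cases pathE_Down: "path lab n (Down # \<tau>) m"
inductive_cases pathE_SW: "path lab n (SW # \<tau>) m"
inductive_cases pathE_SE: "path lab n (SE # \<tau>) m"

lemma path_Nil [simp]: "path lab n [] m \<longleftrightarrow> m = n"
  by (blast elim: pathE_Nil intro: path.intros)

lemma path_Down [simp]: "path lab n (Down # \<tau>) m \<longleftrightarrow> (\<exists>l. path lab n \<tau> l \<and> lab l = Lam m)"
  by (blast elim: pathE_Down intro: path.intros)

lemma path_SW [simp]: "path lab n (SW # \<tau>) m \<longleftrightarrow> (\<exists>a m2. path lab n \<tau> a \<and> lab a = App m m2)"
  by (blast elim: pathE_SW intro: path.intros)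

lemma path_SE [simp]: "path lab n (SE # \<tau>) m \<longleftrightarrow> (\<exists>a m1. path lab n \<tau> a \<and> lab a = App m1 m)"
  by (blast elim: pathE_SE intro: path.intros)

lemma path_deterministic: "path lab n \<tau> x \<Longrightarrow> path lab n \<tau> y \<Longrightarrow> x = y"
proof (induction \<tau> arbitrary: x y)
  case (Cons d \<tau>)
  then show ?case by (cases d; clarsimp; metis node_kind.inject)
qed simp

lemma path_append: "path lab n (\<tau>0 @ \<tau>1) x \<longleftrightarrow> (\<exists>y. path lab n \<tau>1 y \<and> path lab y \<tau>0 x)"
proof (induction \<tau>0 arbitrary: x)
  case (Cons d \<tau>0)
  then show ?case by (cases d) auto
qed simp

lemma path_Cons: "path lab n (d # \<tau>) m \<longleftrightarrow> (\<exists>x. path lab n \<tau> x \<and> path lab x [d] m)"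
  using path_append[of lab n "[d]" \<tau> m] by simp

lemma crosses_split: "crosses lab n \<tau> m \<Longrightarrow> \<exists>\<tau>0 \<tau>1. \<tau> = \<tau>0 @ \<tau>1 \<and> path lab n \<tau>1 m"
proof (induction rule: crosses.induct)
  case (crosses_here n \<tau> m)
  then show ?case by (metis append_Nil)
next
  case (crosses_prefix n \<tau>' m d)
  then show ?case by (metis append_Cons)
qed

lemma path_in_nodes: "pre_lambda_graph N lab \<Longrightarrow> n \<in> N \<Longrightarrow> path lab n \<tau> m \<Longrightarrow> m \<in> N"
proof (induction \<tau> arbitrary: m)
  case (Cons d \<tau>)
  then obtain x where x: "path lab n \<tau> x"
    and step: "lab x = Lam m \<or> (\<exists>a b. lab x = App a b \<and> (m = a \<or> m = b))"
    by (cases d) auto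
  have "x \<in> N"
    using Cons.IH[OF Cons.prems(1,2) x] .
  with step Cons.prems(1) show ?case
    unfolding pre_lambda_graph_def by blast
qed simp

lemma wf_proper_descendant:
  assumes "lambda_graph N lab"
  shows "wf {(m, n). n \<in> N \<and> (\<exists>\<tau>. \<tau> \<noteq> [] \<and> path lab n \<tau> m)}" (is "wf ?D")
proof (rule finite_acyclic_wf)
  have pre: "pre_lambda_graph N lab" and "finite N"
    and acyclic: "\<And>n \<tau>. n \<in> N \<Longrightarrow> path lab n \<tau> n \<Longrightarrow> \<tau> = []"
    using assms by (auto simp: lambda_graph_def)
  have "?D \<subseteq> N \<times> N"
    using path_in_nodes[OF pre] by blast
  then show "finite ?D"
    using \<open>finite N\<close> finite_subset by blast
  have "trans ?D"
  proof (rule transI)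
    fix a b c
    assume "(a, b) \<in> ?D" and "(b, c) \<in> ?D"
    then obtain \<tau>1 \<tau>2 where "c \<in> N" "\<tau>2 \<noteq> []" "path lab c \<tau>2 b" "path lab b \<tau>1 a"
      by blast
    then show "(a, c) \<in> ?D"
      using path_append[of lab c \<tau>1 \<tau>2 a] by blast
  qed
  moreover have "irrefl ?D"
    using acyclic by (auto simp: irrefl_def)
  ultimately show "acyclic ?D"
    by (simp add: acyclic_irrefl trancl_id)
qed

lemma propagated_converse: "propagated lab (R\<inverse>) \<longleftrightarrow> propagated lab R"
  unfolding propagated_def by blast

lemma propagated_step:
  assumes "propagated lab S" and "(a, c) \<in> S" and "path lab a [e] b" and "path lab c [e] d"
  shows "(b, d) \<in> S"
proof -
  have "(a', c') \<in> S" if "lab a = Lam a'" "lab c = Lam c'" for a' c'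
    using assms(1,2) that unfolding propagated_def by blast
  moreover have "(a1, c1) \<in> S \<and> (a2, c2) \<in> S" if "lab a = App a1 a2" "lab c = App c1 c2" for a1 a2 c1 c2
    using assms(1,2) that unfolding propagated_def by blast
  ultimately show ?thesis
    using assms(3,4) by (cases e) auto
qed

lemma propagated_path:
  "propagated lab S \<Longrightarrow> (a, c) \<in> S \<Longrightarrow> path lab a \<sigma> b \<Longrightarrow> path lab c \<sigma> d \<Longrightarrow> (b, d) \<in> S"
proof (induction \<sigma> arbitrary: b d)
  case (Cons e \<sigma>)
  obtain x y where x: "path lab a \<sigma> x" "path lab x [e] b" and y: "path lab c \<sigma> y" "path lab y [e] d"
    using Cons.prems(3,4) path_Cons[of lab a e \<sigma> b] path_Cons[of lab c e \<sigma> d] by blast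
  have "(x, y) \<in> S"
    using Cons.IH[OF Cons.prems(1,2) x(1) y(1)] .
  then show ?case
    using propagated_step[OF Cons.prems(1) _ x(2) y(2)] by blast
qed simp

lemma blind_bisimulation_converse:
  "blind_bisimulation lab (R\<inverse>) \<longleftrightarrow> blind_bisimulation lab R"
proof -
  have "homogeneous_nodes lab n m \<longleftrightarrow> homogeneous_nodes lab m n" for n m
    unfolding homogeneous_nodes_def by blast
  then have "homogeneous lab (R\<inverse>) \<longleftrightarrow> homogeneous lab R"
    unfolding homogeneous_def by fastforce
  then show ?thesis
    by (simp add: blind_bisimulation_def propagated_converse)
qed

lemma blind_bisimulation_step:
  assumes "blind_bisimulation lab R" and "(a, c) \<in> R" and "path lab a [e] b"
  shows "\<exists>d. path lab c [e] d \<and> (b, d) \<in> R"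
proof -
  have "homogeneous_nodes lab a c"
    using assms(1,2) by (auto simp: blind_bisimulation_def homogeneous_def)
  with assms(3) obtain d where d: "path lab c [e] d"
    by (cases e) (auto simp: homogeneous_nodes_def)
  moreover have "(b, d) \<in> R"
    using propagated_step[OF _ assms(2,3) d] assms(1) by (simp add: blind_bisimulation_def)
  ultimately show ?thesis
    by blast
qed

lemma blind_bisimulation_path:
  "blind_bisimulation lab R \<Longrightarrow> (a, c) \<in> R \<Longrightarrow> path lab a \<sigma> b \<Longrightarrow> \<exists>d. path lab c \<sigma> d \<and> (b, d) \<in> R"
proof (induction \<sigma> arbitrary: b)
  case (Cons e \<sigma>)
  obtain x where x: "path lab a \<sigma> x" "path lab x [e] b"
    using Cons.prems(3) path_Cons[of lab a e \<sigma> b] by blast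
  obtain y where y: "path lab c \<sigma> y" "(x, y) \<in> R"
    using Cons.IH[OF Cons.prems(1,2) x(1)] by blast
  obtain d where "path lab y [e] d" "(b, d) \<in> R"
    using blind_bisimulation_step[OF Cons.prems(1) y(2) x(2)] by blast
  with y(1) show ?case
    using path_Cons[of lab c e \<sigma> d] by blast
qed simp

lemma blind_bisimulation_descendant_path_Nil:
  assumes "lambda_graph N lab" and bisim: "blind_bisimulation lab R"
    and "y \<in> N" and "(x, y) \<in> R" and "(x, z) \<in> R" and "path lab y \<sigma> z"
  shows "\<sigma> = []"
proof (rule ccontr)
  assume "\<sigma> \<noteq> []"
  have pre: "pre_lambda_graph N lab"
    using assms(1) by (simp add: lambda_graph_def)
  from wf_proper_descendant[OF assms(1)] assms(3-6) show False
  proof (induction y arbitrary: x z rule: wf_induct_rule)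
    case (less y)
    obtain x1 where x1: "path lab x \<sigma> x1" "(x1, z) \<in> R"
      using blind_bisimulation_path[of lab "R\<inverse>" y x \<sigma> z] bisim less.prems
      by (auto simp: blind_bisimulation_converse)
    obtain z1 where z1: "path lab z \<sigma> z1" "(x1, z1) \<in> R"
      using blind_bisimulation_path[OF bisim less.prems(3) x1(1)] by blast
    have "z \<in> N"
      using path_in_nodes[OF pre less.prems(1,4)] .
    then show False
      using less.IH[OF _ \<open>z \<in> N\<close> x1(2) z1(2,1)] less.prems(1,4) \<open>\<sigma> \<noteq> []\<close> by blast
  qed
qed

lemma subset_propagation: "Q \<subseteq> propagation lab Q"
  unfolding propagation_def by blast

lemma propagation_least: "propagated lab S \<Longrightarrow> Q \<subseteq> S \<Longrightarrow> propagation lab Q \<subseteq> S"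
  unfolding propagation_def by blast

lemma propagated_propagation: "propagated lab (propagation lab Q)"
  unfolding propagated_def propagation_def by blast

lemma propagation_converse: "propagation lab (Q\<inverse>) = (propagation lab Q)\<inverse>"
proof
  show "propagation lab (Q\<inverse>) \<subseteq> (propagation lab Q)\<inverse>"
    by (simp add: propagation_least propagated_converse propagated_propagation subset_propagation)
  have "propagation lab Q \<subseteq> (propagation lab (Q\<inverse>))\<inverse>"
    using propagation_least[of lab "(propagation lab (Q\<inverse>))\<inverse>" Q]
    by (metis converse_converse converse_mono propagated_converse propagated_propagation subset_propagation)
  then show "(propagation lab Q)\<inverse> \<subseteq> propagation lab (Q\<inverse>)"
    by blast
qed

lemma propagation_path_suffix:
  assumes "lambda_graph N lab" and "R \<subseteq> N \<times> N" and bisim: "blind_bisimulation lab R"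
    and "Q \<subseteq> R" and "(n, m) \<in> Q"
    and "path lab n \<beta> l" and "path lab m (\<sigma> @ \<beta>) l'" and "(l, l') \<in> R"
  shows "(l, l') \<in> propagation lab Q"
proof -
  obtain k where k: "path lab m \<beta> k" "path lab k \<sigma> l'"
    using assms(7) unfolding path_append by blast
  have lk: "(l, k) \<in> propagation lab Q"
    using propagated_path[OF propagated_propagation _ assms(6) k(1)] assms(5) subset_propagation
    by blast
  moreover have "(l, k) \<in> R"
    using lk propagation_least[OF _ assms(4)] bisim by (auto simp: blind_bisimulation_def)
  ultimately have "\<sigma> = []"
    using blind_bisimulation_descendant_path_Nil[OF assms(1) bisim _ _ assms(8) k(2)] assms(2)
    by blast
  then show ?thesis
    using lk k(2) by simp
qed

theorem mainTheorem8:
  fixes N :: "'n set" and lab :: "'n \<Rightarrow> ('n, 'a) node_kind"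
    and R Q :: "'n rel" and n m l l' :: 'n and \<tau> :: trace
  assumes "lambda_graph N lab"
    and "R \<subseteq> N \<times> N"
    and "blind_bisimulation lab R"
    and "Q \<subseteq> R"
    and "(n, m) \<in> Q"
    and "\<exists>x. path lab n \<tau> x" and "crosses lab n \<tau> l" and "\<exists>b. lab l = Lam b"
    and "\<exists>y. path lab m \<tau> y" and "crosses lab m \<tau> l'" and "\<exists>b. lab l' = Lam b"
    and "(l, l') \<in> R"
  shows "(l, l') \<in> propagation lab Q"
proof -
  obtain \<alpha> \<beta> \<alpha>' \<beta>' where \<beta>: "\<tau> = \<alpha> @ \<beta>" "path lab n \<beta> l"
    and \<beta>': "\<tau> = \<alpha>' @ \<beta>'" "path lab m \<beta>' l'"
    using crosses_split[OF assms(7)] crosses_split[OF assms(10)] by blast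
  from \<beta>(1) \<beta>'(1) obtain \<sigma> where "\<beta>' = \<sigma> @ \<beta> \<or> \<beta> = \<sigma> @ \<beta>'"
    using append_eq_append_conv2[of \<alpha> \<beta> \<alpha>' \<beta>'] by auto
  with \<beta>(2) \<beta>'(2) consider "path lab n \<beta> l" "path lab m (\<sigma> @ \<beta>) l'"
    | "path lab m \<beta>' l'" "path lab n (\<sigma> @ \<beta>') l"
    by blast
  then show ?thesis
  proof cases
    case 1
    then show ?thesis
      by (rule propagation_path_suffix[OF assms(1-5) _ _ assms(12)])
  next
    case 2
    have "R\<inverse> \<subseteq> N \<times> N" "blind_bisimulation lab (R\<inverse>)" "Q\<inverse> \<subseteq> R\<inverse>"
      using assms(2-4) by (auto simp: blind_bisimulation_converse)
    then have "(l', l) \<in> propagation lab (Q\<inverse>)"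
      using propagation_path_suffix[OF assms(1)] 2 assms(5,12) by blast
    then show ?thesis
      by (simp add: propagation_converse)
  qed
qed

end
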